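(* Let $q=2^f\geq 4$ and let $I=\{0,\ f,\ 2f/\gcd(3,f),\ 4f/\gcd(3,f)\}$. Let $b\in\mathbb{F}_{q^2}^\times$ satisfy $b+b^q=1$ and $b^{q+1}\neq 1$. Then there exists an element $a\in\mathbb{F}_{q^2}^\times$ of order $q+1$ such that (1) $(1+b+b^2)^{2^i}\neq a+a^{-1}+1$ for every $i\in I$; (2) $(1+b+b^2)^{2^i}\neq a(1+b+b^3+b^4)+a^{-1}(b^2+b^3+b^4)$ for every $i\in I$; (3) $a+a^{-1}+1\neq a(1+b+b^3+b^4)+a^{-1}(b^2+b^3+b^4)$; (4) $a+a^{-1}+1\neq 0$. *)

theory Defs
  imports Main
begin

definition mult_order :: "'a::field \<Rightarrow> nat" where
  "mult_order x = (if \<exists>n>0. x ^ n = 1 then (LEAST n. 0 < n \<and> x ^ n = 1) else 0)"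

end

theory Submission
  imports
    Defs
    "HOL-Decision_Procs.Algebra_Aux"
    "HOL-Number_Theory.Residues"
    "HOL-Computational_Algebra.Polynomial"
begin

(* Write q = 2^f and c = 1 + b + b^2; the trace condition gives b^q = b + 1, hence c^q = c,
   i.e. c lies in F_q, so the values c^(2^i), i in I, are at most three conjugates of c, and
   only c itself when 3 does not divide f.

   For f >= 4 we count.  The multiplicative group of F_(q^2) is cyclic of order q^2 - 1, so it
   contains at least phi(q + 1) >= 2f elements of order q + 1.  For a fixed a, each of the
   conditions (1)-(3) fails only if a is a nonzero root of a nonzero quadratic, so at most
   4 * #{c^(2^i)} + 2 elements a violate one of them, which is less than phi(q + 1).

   For f = 2, 3 we take the norm-one element a = b / (b + 1) = b^(1 - q).  Then
   a + 1/a + 1 = c / (c + 1) and a(1 + b + b^3 + b^4) + (b^2 + b^3 + b^4)/a = 0.  As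
   x |-> x / (x + 1) is an involution commuting with the Frobenius, c^(2^i) = c / (c + 1) would
   give c^(2^(2i)) = c, which for these small f forces c into F_2.

   Finally a + 1/a + 1 = 0 means a^3 = 1, impossible for an element of order q + 1 > 3. *)

section \<open>Multiplicative order\<close>

lemma mult_order_pos_iff:
  fixes x :: "'a::field"
  shows "0 < mult_order x \<longleftrightarrow> (\<exists>n>0. x ^ n = 1)"
  using LeastI_ex[of "\<lambda>n. 0 < n \<and> x ^ n = 1"] by (auto simp: mult_order_def)

lemma power_mult_order:
  fixes x :: "'a::field"
  assumes "0 < mult_order x"
  shows "x ^ mult_order x = 1"
proof -
  have "\<exists>n>0. x ^ n = 1" using assms mult_order_pos_iff by blast
  then show ?thesis
    using LeastI_ex[of "\<lambda>n. 0 < n \<and> x ^ n = 1"] by (simp add: mult_order_def)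
qed

lemma power_ne_1_below_mult_order:
  fixes x :: "'a::field"
  assumes "0 < r" "r < mult_order x"
  shows "x ^ r \<noteq> 1"
proof -
  have "0 < mult_order x" using assms by simp
  then have "\<exists>n>0. x ^ n = 1" using mult_order_pos_iff by blast
  then show ?thesis
    using assms not_less_Least[of r "\<lambda>n. 0 < n \<and> x ^ n = 1"] by (simp add: mult_order_def)
qed

lemma power_mod_mult_order:
  fixes x :: "'a::field"
  assumes "0 < mult_order x"
  shows "x ^ (m mod mult_order x) = x ^ m"
proof -
  have "x ^ m = (x ^ mult_order x) ^ (m div mult_order x) * x ^ (m mod mult_order x)"
    by (simp flip: power_mult power_add)
  then show ?thesis
    by (simp add: power_mult_order[OF assms])
qed

lemma power_eq_1_iff_mult_order_dvd:
  fixes x :: "'a::field"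
  assumes "0 < mult_order x"
  shows "x ^ m = 1 \<longleftrightarrow> mult_order x dvd m"
proof
  let ?d = "mult_order x"
  assume "x ^ m = 1"
  then have "x ^ (m mod ?d) = 1"
    using power_mod_mult_order[OF assms] by simp
  moreover have "m mod ?d < ?d" using assms by simp
  ultimately have "\<not> 0 < m mod ?d"
    using power_ne_1_below_mult_order by blast
  then show "?d dvd m" by (simp add: dvd_eq_mod_eq_0)
next
  assume "mult_order x dvd m"
  then show "x ^ m = 1"
    using power_mult_order[OF assms] by (auto simp: power_mult)
qed

lemma mult_order_eqI:
  fixes x :: "'a::field"
  assumes "0 < n" "\<And>m. x ^ m = 1 \<longleftrightarrow> n dvd m"
  shows "mult_order x = n"
proof -
  have "x ^ n = 1" using assms(2) by simp
  then have pos: "0 < mult_order x" using assms(1) mult_order_pos_iff by blast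
  have "mult_order x dvd m \<longleftrightarrow> n dvd m" for m
    using assms(2) power_eq_1_iff_mult_order_dvd[OF pos] by simp
  from this[of n] this[of "mult_order x"] show ?thesis
    by (simp add: dvd_antisym)
qed

lemma mult_order_prime_power:
  fixes x :: "'a::field"
  assumes "prime p" "x ^ (p ^ Suc k) = 1" "x ^ (p ^ k) \<noteq> 1"
  shows "mult_order x = p ^ Suc k"
proof -
  have "0 < p ^ Suc k"
    using assms(1) prime_gt_0_nat by simp
  then have pos: "0 < mult_order x"
    using assms(2) mult_order_pos_iff by blast
  then have "mult_order x dvd p ^ Suc k"
    using assms(2) power_eq_1_iff_mult_order_dvd by blast
  then obtain j where j: "j \<le> Suc k" "mult_order x = p ^ j"
    using divides_primepow_nat[OF assms(1)] by blast
  have "\<not> mult_order x dvd p ^ k"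
    using assms(3) power_eq_1_iff_mult_order_dvd[OF pos] by blast
  then have "\<not> j \<le> k"
    using j(2) by (auto simp: le_imp_power_dvd)
  then show ?thesis using j by (simp add: le_Suc_eq)
qed

lemma mult_order_power_coprime:
  fixes h :: "'a::field"
  assumes "0 < mult_order h" "coprime k (mult_order h)"
  shows "mult_order (h ^ k) = mult_order h"
proof (rule mult_order_eqI[OF assms(1)])
  fix m
  have "(h ^ k) ^ m = 1 \<longleftrightarrow> mult_order h dvd k * m"
    using power_eq_1_iff_mult_order_dvd[OF assms(1)] by (simp flip: power_mult)
  also have "\<dots> \<longleftrightarrow> mult_order h dvd m"
    using assms(2) by (simp add: coprime_commute coprime_dvd_mult_right_iff)
  finally show "(h ^ k) ^ m = 1 \<longleftrightarrow> mult_order h dvd m" .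
qed

lemma mult_order_power_div:
  fixes g :: "'a::field"
  assumes "0 < mult_order g" "n dvd mult_order g"
  shows "mult_order (g ^ (mult_order g div n)) = n"
proof -
  from assms obtain k where k: "mult_order g = n * k" "0 < n" by fastforce
  then have "0 < k" using assms(1) by simp
  show ?thesis
  proof (rule mult_order_eqI[OF \<open>0 < n\<close>])
    fix m
    have "(g ^ (mult_order g div n)) ^ m = 1 \<longleftrightarrow> n * k dvd k * m"
      using power_eq_1_iff_mult_order_dvd[OF assms(1)] k by (simp flip: power_mult)
    also have "\<dots> \<longleftrightarrow> n dvd m"
      using \<open>0 < k\<close> by (simp add: mult.commute)
    finally show "(g ^ (mult_order g div n)) ^ m = 1 \<longleftrightarrow> n dvd m" .
  qed
qed

lemma inj_on_power_mult_order:
  fixes h :: "'a::field"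
  assumes "0 < mult_order h"
  shows "inj_on (\<lambda>k. h ^ k) {1..mult_order h}"
proof (rule linorder_inj_onI')
  fix k l assume kl: "k \<in> {1..mult_order h}" "l \<in> {1..mult_order h}" "k < l"
  have "h \<noteq> 0"
  proof
    assume "h = 0"
    then show False using power_mult_order[OF assms] assms by (simp add: power_0_left)
  qed
  have "\<not> mult_order h dvd l - k"
    using kl by (auto dest: dvd_imp_le)
  then have "h ^ (l - k) \<noteq> 1"
    using power_eq_1_iff_mult_order_dvd[OF assms] by blast
  moreover have "h ^ l = h ^ k * h ^ (l - k)"
    using kl(3) by (simp flip: power_add)
  ultimately show "h ^ k \<noteq> h ^ l"
    using \<open>h \<noteq> 0\<close> by auto
qed

lemma totient_le_card_mult_order:
  fixes h :: "'a::{field,finite}"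
  assumes "0 < mult_order h"
  shows "totient (mult_order h) \<le> card {x::'a. mult_order x = mult_order h}"
proof -
  have "totatives (mult_order h) \<subseteq> {1..mult_order h}"
    by (auto simp: in_totatives_iff)
  then have "totient (mult_order h) = card ((\<lambda>k. h ^ k) ` totatives (mult_order h))"
    unfolding totient_def using inj_on_power_mult_order[OF assms]
    by (simp add: card_image inj_on_subset)
  also have "\<dots> \<le> card {x::'a. mult_order x = mult_order h}"
    using assms by (intro card_mono) (auto simp: in_totatives_iff mult_order_power_coprime)
  finally show ?thesis .
qed

lemma finite_field_exists_generator:
  "\<exists>g::'a::{field,finite}. g \<noteq> 0 \<and> (\<forall>x. x \<noteq> 0 \<longrightarrow> (\<exists>i. x = g ^ i))"
proof -
  have "finite (carrier (cring_class_ops::'a ring))"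
    by (simp add: cring_class_ops_def)
  from field.finite_field_mult_group_has_gen[OF field_class this]
  obtain g :: 'a where "g \<in> carrier (mult_of cring_class_ops)"
    "carrier (mult_of cring_class_ops) = {g [^]\<^bsub>cring_class_ops\<^esub> i | i::nat. i \<in> UNIV}"
    by blast
  moreover have "carrier (mult_of cring_class_ops) = UNIV - {0::'a}"
    by (simp add: cring_class_ops_def)
  ultimately have "g \<noteq> 0" "UNIV - {0} = {g ^ i | i::nat. i \<in> UNIV}"
    by (simp_all add: power_class zero_class)
  then show ?thesis
    by blast
qed

lemma power_card_minus_1_eq_1:
  fixes x :: "'a::{field,finite}"
  assumes "x \<noteq> 0"
  shows "x ^ (card (UNIV::'a set) - 1) = 1"
proof -
  let ?U = "UNIV - {0::'a}"
  have "(\<Prod>y\<in>?U. y) = (\<Prod>y\<in>?U. x * y)"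
    by (rule prod.reindex_bij_witness[of _ "\<lambda>y. x * y" "\<lambda>y. y / x"]) (use assms in auto)
  also have "\<dots> = x ^ (card (UNIV::'a set) - 1) * (\<Prod>y\<in>?U. y)"
    by (simp add: prod.distrib card_Diff_singleton)
  finally show ?thesis
    by simp
qed

lemma finite_field_exists_mult_order:
  "\<exists>g::'a::{field,finite}. mult_order g = card (UNIV::'a set) - 1"
proof -
  obtain g :: 'a where g: "g \<noteq> 0" "\<And>x. x \<noteq> 0 \<Longrightarrow> \<exists>i. x = g ^ i"
    using finite_field_exists_generator by blast
  let ?N = "card (UNIV::'a set) - 1"
  have "0 < ?N"
    using card_mono[of UNIV "{0, 1::'a}"] by simp
  have pos: "0 < mult_order g"
    using power_card_minus_1_eq_1[OF g(1)] \<open>0 < ?N\<close> mult_order_pos_iff by blast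
  have "UNIV - {0} \<subseteq> (\<lambda>i. g ^ i) ` {..<mult_order g}"
  proof
    fix x :: 'a assume "x \<in> UNIV - {0}"
    then obtain i where "x = g ^ i" using g(2) by blast
    also have "\<dots> = g ^ (i mod mult_order g)"
      using power_mod_mult_order[OF pos] by simp
    finally show "x \<in> (\<lambda>i. g ^ i) ` {..<mult_order g}"
      using pos by auto
  qed
  then have "card (UNIV - {0::'a}) \<le> card ((\<lambda>i. g ^ i) ` {..<mult_order g})"
    by (intro card_mono) auto
  then have "?N \<le> mult_order g"
    using card_image_le[of "{..<mult_order g}" "\<lambda>i. g ^ i"] by (simp add: card_Diff_singleton)
  moreover have "mult_order g dvd ?N"
    using power_card_minus_1_eq_1[OF g(1)] power_eq_1_iff_mult_order_dvd[OF pos] by blast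
  ultimately show ?thesis
    using \<open>0 < ?N\<close> dvd_imp_le le_antisym by blast
qed

lemma totient_le_card_mult_order_eq:
  assumes "n dvd card (UNIV::'a::{field,finite} set) - 1"
  shows "totient n \<le> card {x::'a. mult_order x = n}"
proof -
  obtain g :: 'a where g: "mult_order g = card (UNIV::'a set) - 1"
    using finite_field_exists_mult_order by blast
  then have pos: "0 < mult_order g"
    using card_mono[of UNIV "{0, 1::'a}"] by simp
  define h where "h = g ^ (mult_order g div n)"
  have "mult_order h = n"
    unfolding h_def using mult_order_power_div[OF pos] assms g by simp
  moreover have "0 < n"
    using assms pos g by (intro Nat.gr0I) simp
  ultimately show ?thesis
    using totient_le_card_mult_order[of h] by simp
qed

lemma add_inverse_add_1_eq_0_iff:
  fixes x :: "'a::field"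
  assumes "x \<noteq> 1"
  shows "x + inverse x + 1 = 0 \<longleftrightarrow> x ^ 3 = 1"
proof (cases "x = 0")
  case False
  have "x ^ 3 - 1 = (x - 1) * (x * (x + inverse x + 1))"
    using False by (simp add: field_simps power3_eq_cube)
  then show ?thesis
    using False assms by auto
qed simp

lemma mult_order_0 [simp]: "mult_order (0::'a::field) = 0"
  by (simp add: mult_order_def power_0_left)

lemma add_inverse_add_1_ne_0:
  fixes x :: "'a::field"
  assumes "3 < mult_order x"
  shows "x + inverse x + 1 \<noteq> 0"
proof -
  have "x ^ 3 \<noteq> 1"
    using assms power_eq_1_iff_mult_order_dvd[of x 3] by (auto dest: dvd_imp_le)
  moreover from this have "x \<noteq> 1" by auto
  ultimately show ?thesis
    using add_inverse_add_1_eq_0_iff by blast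
qed

lemma card_nonzero_solutions_le_2:
  fixes u v w :: "'a::field"
  assumes "u \<noteq> 0 \<or> v \<noteq> 0 \<or> w \<noteq> 0"
  shows "card {x. x \<noteq> 0 \<and> u * x + v * inverse x = w} \<le> 2"
proof -
  let ?p = "[:v, - w, u:]"
  have "?p \<noteq> 0" using assms by auto
  have "poly ?p x = 0" if "x \<noteq> 0" "u * x + v * inverse x = w" for x
    using that by (auto simp: field_simps)
  then have "{x. x \<noteq> 0 \<and> u * x + v * inverse x = w} \<subseteq> {x. poly ?p x = 0}"
    by blast
  then have "card {x. x \<noteq> 0 \<and> u * x + v * inverse x = w} \<le> card {x. poly ?p x = 0}"
    using poly_roots_finite[OF \<open>?p \<noteq> 0\<close>] by (rule card_mono[rotated])
  also have "\<dots> \<le> degree ?p"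
    using card_poly_roots_bound[OF \<open>?p \<noteq> 0\<close>] .
  also have "\<dots> \<le> 2"
    by simp
  finally show ?thesis .
qed

lemma two_mult_le_totient_two_power_plus_1:
  assumes "0 < f"
  shows "2 * f \<le> totient (2 ^ f + 1)"
proof -
  define n where "n = (2::nat) ^ f + 1"
  define low where "low = (\<lambda>j. (2::nat) ^ j) ` {..<f}"
  define high where "high = (\<lambda>j. n - 2 ^ j) ` {..<f}"
  have pow_le: "(2::nat) ^ j \<le> 2 ^ (f - 1)" if "j < f" for j
    using that by (intro power_increasing) auto
  have half: "2 * 2 ^ (f - 1) = (2::nat) ^ f"
    using assms by (simp flip: power_Suc)
  have pow_less: "(2::nat) ^ j < n" if "j < f" for j
    using pow_le[OF that] half unfolding n_def by linarith
  have coprime_pow: "coprime ((2::nat) ^ j) n" for j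
    using assms by (simp add: n_def)
  have "low \<subseteq> totatives n"
  proof
    fix x assume "x \<in> low"
    then obtain j where j: "j < f" "x = 2 ^ j" by (auto simp: low_def)
    then have "x \<le> n" using pow_less[OF j(1)] by simp
    then show "x \<in> totatives n" using coprime_pow[of j] j(2) by (simp add: in_totatives_iff)
  qed
  moreover have "high \<subseteq> totatives n"
  proof
    fix x assume "x \<in> high"
    then obtain j where j: "j < f" "x = n - 2 ^ j" by (auto simp: high_def)
    have "coprime x n"
      using coprime_pow[of j] j(2) pow_less[OF j(1)] by (simp add: coprime_iff_gcd_eq_1 gcd_diff2_nat)
    moreover have "0 < x" "x \<le> n" using pow_less[OF j(1)] j(2) by simp_all
    ultimately show "x \<in> totatives n" by (simp add: in_totatives_iff)
  qed
  moreover have "low \<inter> high = {}"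
  proof -
    have "2 ^ i < n - 2 ^ j" if "i < f" "j < f" for i j
      using pow_le[OF that(1)] pow_le[OF that(2)] half unfolding n_def by linarith
    then show ?thesis
      by (fastforce simp: low_def high_def)
  qed
  moreover have "card low = f"
    unfolding low_def by (subst card_image) (auto simp: inj_on_def)
  moreover have "card high = f"
  proof -
    have "inj_on (\<lambda>j. n - 2 ^ j) {..<f}"
    proof (rule inj_onI)
      fix i j assume "i \<in> {..<f}" "j \<in> {..<f}" "n - 2 ^ i = n - (2::nat) ^ j"
      moreover from calculation have "2 ^ i < n" "(2::nat) ^ j < n"
        using pow_less by simp_all
      ultimately have "(2::nat) ^ i = 2 ^ j" by linarith
      then show "i = j" by simp
    qed
    then show ?thesis by (simp add: high_def card_image)
  qed
  ultimately have "card (low \<union> high) = 2 * f" "low \<union> high \<subseteq> totatives n"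
    by (simp_all add: card_Un_disjoint low_def high_def)
  then show ?thesis
    unfolding totient_def n_def by (metis card_mono finite_totatives)
qed

lemma CHAR_eq_2_if_card_power_2:
  assumes "card (UNIV::'a::{idom,finite} set) = 2 ^ k" "0 < k"
  shows "CHAR('a) = 2"
proof -
  have "prime CHAR('a)"
    using prime_CHAR_semidom finite_imp_CHAR_pos[OF finite_UNIV] by blast
  moreover have "CHAR('a) dvd 2 ^ k"
    using CHAR_dvd_CARD assms(1) by metis
  ultimately show ?thesis
    using prime_dvd_power primes_dvd_imp_eq two_is_prime_nat by blast
qed

lemma frobenius_CHAR_2:
  fixes x y :: "'a::comm_ring_1"
  assumes "CHAR('a) = 2"
  shows "(x + y) ^ (2 ^ k) = x ^ (2 ^ k) + y ^ (2 ^ k)"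
  by (rule freshmans_dream'[where n = k]) (simp_all add: assms)

lemma moebius_involution_CHAR_2:
  fixes x :: "'a::field"
  assumes "CHAR('a) = 2" "x + 1 \<noteq> 0"
  shows "(x / (x + 1)) / (x / (x + 1) + 1) = x"
proof -
  have "x + x = 0"
    using uminus_CHAR_2[OF assms(1), of x] by (simp add: add_eq_0_iff)
  have "x / (x + 1) + 1 = (x + x + 1) / (x + 1)"
    using assms(2) by (simp add: field_simps)
  also have "\<dots> = 1 / (x + 1)"
    using \<open>x + x = 0\<close> by simp
  finally show ?thesis
    using assms(2) by simp
qed

section \<open>Elements of trace one\<close>

locale trace_one_element =
  fixes f :: nat and b :: "'a::{field,finite}"
  assumes card_UNIV: "card (UNIV :: 'a set) = (2 ^ f) ^ 2"
    and q_ge_4: "2 ^ f \<ge> (4::nat)"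
    and b_ne_0: "b \<noteq> 0"
    and trace_b: "b + b ^ (2 ^ f) = 1"
    and norm_b: "b ^ (2 ^ f + 1) \<noteq> 1"
begin

abbreviation q :: nat where "q \<equiv> 2 ^ f"

definition c :: 'a where "c = 1 + b + b ^ 2"
definition A :: 'a where "A = 1 + b + b ^ 3 + b ^ 4"
definition B :: 'a where "B = b ^ 2 + b ^ 3 + b ^ 4"
definition exponent_set :: "nat set" where
  "exponent_set = {0, f, 2 * f div gcd 3 f, 4 * f div gcd 3 f}"

definition admissible :: "'a \<Rightarrow> bool" where
  "admissible a \<longleftrightarrow>
    (\<forall>i \<in> exponent_set. c ^ 2 ^ i \<noteq> a + inverse a + 1) \<and>
    (\<forall>i \<in> exponent_set. c ^ 2 ^ i \<noteq> a * A + inverse a * B) \<and>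
    a + inverse a + 1 \<noteq> a * A + inverse a * B"

lemma f_ge_2: "2 \<le> f"
proof (rule ccontr)
  assume "\<not> 2 \<le> f"
  then have "(2::nat) ^ f \<le> 2 ^ 1" by (intro power_increasing) simp_all
  with q_ge_4 show False by simp
qed

lemma CHAR_eq_2: "CHAR('a) = 2"
proof (rule CHAR_eq_2_if_card_power_2)
  show "card (UNIV :: 'a set) = 2 ^ (2 * f)"
    using card_UNIV by (metis power_mult mult.commute)
qed (use f_ge_2 in simp)

lemma two_eq_0: "(2::'a) = 0"
  using of_nat_CHAR[where 'a = 'a] CHAR_eq_2 by simp

lemma diff_eq_add: "(x::'a) - y = x + y"
  by (simp only: diff_conv_add_uminus uminus_CHAR_2[OF CHAR_eq_2])

lemma frobenius: "((x::'a) + y) ^ 2 ^ k = x ^ 2 ^ k + y ^ 2 ^ k"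
  using frobenius_CHAR_2[OF CHAR_eq_2] .

lemma b_pow_q: "b ^ q = b + 1"
proof -
  have "b ^ q = 1 - b"
    using trace_b by (simp add: eq_diff_eq add.commute)
  then show ?thesis
    by (simp add: diff_eq_add add.commute)
qed

lemma b_plus_1_ne_0: "b + 1 \<noteq> 0"
  using b_ne_0 b_pow_q by (metis power_not_zero)

lemma c_plus_1: "c + 1 = b * (b + 1)"
  using two_eq_0 by (simp add: c_def algebra_simps power2_eq_square)

lemma c_plus_1_ne_0: "c + 1 \<noteq> 0"
  using b_ne_0 b_plus_1_ne_0 by (simp add: c_plus_1)

lemma c_ne_0: "c \<noteq> 0"
proof
  assume "c = 0"
  have "b ^ (q + 1) = b * (b + 1)" using b_pow_q by (simp add: mult.commute)
  also have "\<dots> = 1" using \<open>c = 0\<close> c_plus_1 by simp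
  finally show False using norm_b by simp
qed

lemma c_pow_q: "c ^ q = c"
proof -
  have "c ^ q = 1 + b ^ q + (b ^ q) ^ 2"
    by (simp add: c_def frobenius flip: power_mult mult.commute)
  also have "\<dots> = c + 2 * (b + 1)"
    by (simp add: b_pow_q c_def algebra_simps power2_eq_square)
  finally show ?thesis
    using two_eq_0 by simp
qed

lemma c_pow_two_pow_mult: "c ^ 2 ^ (k * f) = c"
proof (induction k)
  case (Suc k)
  have "c ^ 2 ^ (Suc k * f) = (c ^ q) ^ 2 ^ (k * f)"
    by (simp add: power_add power_mult)
  then show ?case
    using c_pow_q Suc.IH by simp
qed simp

definition a\<^sub>0 :: 'a where "a\<^sub>0 = b / (b + 1)"

lemma b_mult_b_plus_1_ne_0: "b + b * b \<noteq> 0"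
  using c_plus_1_ne_0 unfolding c_plus_1 by (simp add: distrib_left add.commute)

lemma a0_ne_1: "a\<^sub>0 \<noteq> 1"
  using b_plus_1_ne_0 by (simp add: a\<^sub>0_def)

lemma a0_pow_q_plus_1: "a\<^sub>0 ^ (q + 1) = 1"
proof -
  have "(b + 1) ^ q = b"
    using frobenius[of b 1] b_pow_q two_eq_0 by (simp add: add.assoc)
  then have "a\<^sub>0 ^ q = (b + 1) / b"
    by (simp add: a\<^sub>0_def power_divide b_pow_q)
  then show ?thesis
    using b_ne_0 b_plus_1_ne_0 by (simp add: a\<^sub>0_def)
qed

lemma a0_add_inverse_add_1: "a\<^sub>0 + inverse a\<^sub>0 + 1 = c / (c + 1)"
proof -
  have "a\<^sub>0 + inverse a\<^sub>0 + 1 = (b * b + (b + 1) * (b + 1) + b * (b + 1)) / (b * (b + 1))"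
    using b_ne_0 b_plus_1_ne_0 b_mult_b_plus_1_ne_0 by (simp add: a\<^sub>0_def field_simps)
  also have "b * b + (b + 1) * (b + 1) + b * (b + 1) = c + 2 * (b ^ 2 + b)"
    by (simp add: c_def algebra_simps power2_eq_square)
  finally show ?thesis
    using two_eq_0 by (simp add: c_plus_1)
qed

lemma a0_mult_A_add_inverse_mult_B: "a\<^sub>0 * A + inverse a\<^sub>0 * B = 0"
proof -
  have "a\<^sub>0 * A + inverse a\<^sub>0 * B = (b * b * A + (b + 1) * (b + 1) * B) / (b * (b + 1))"
    using b_ne_0 b_plus_1_ne_0 b_mult_b_plus_1_ne_0 by (simp add: a\<^sub>0_def field_simps)
  also have "b * b * A + (b + 1) * (b + 1) * B = 2 * (b^2 + 2*b^3 + 2*b^4 + 2*b^5 + b^6)"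
    unfolding A_def B_def by Groebner_Basis.algebra
  finally show ?thesis
    using two_eq_0 by simp
qed

lemma c_ne_moebius: "c \<noteq> c / (c + 1)"
proof
  assume "c = c / (c + 1)"
  then have "c * c = 0"
    using c_plus_1_ne_0 by (simp add: field_simps)
  then show False
    using c_ne_0 by simp
qed

lemma c_pow_two_pow_double_eq_if_moebius:
  assumes "c ^ 2 ^ i = c / (c + 1)"
  shows "c ^ 2 ^ (2 * i) = c"
proof -
  have "c ^ 2 ^ (2 * i) = (c / (c + 1)) ^ 2 ^ i"
    using assms by (simp add: mult_2 power_add power_mult)
  also have "\<dots> = c ^ 2 ^ i / (c ^ 2 ^ i + 1)"
    by (simp add: power_divide frobenius)
  also have "\<dots> = c"
    using assms moebius_involution_CHAR_2[OF CHAR_eq_2 c_plus_1_ne_0] by simp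
  finally show ?thesis .
qed

lemma c_square_ne_c: "c ^ 2 \<noteq> c"
proof
  assume "c ^ 2 = c"
  then have "c = 1" using c_ne_0 by (simp add: power2_eq_square)
  then show False using c_plus_1_ne_0 two_eq_0 by simp
qed

lemma c_pow_two_pow_ne_moebius_small:
  assumes "f \<le> 3" "i \<in> exponent_set"
  shows "c ^ 2 ^ i \<noteq> c / (c + 1)"
proof -
  have "f = 2 \<or> f = 3" using assms(1) f_ge_2 by auto
  then consider (multiple) "i \<in> {0 * f, 1 * f, 2 * f, 4 * f}"
    | (two) "f = 3" "i = 2" | (four) "f = 3" "i = 4"
    using assms(2) unfolding exponent_set_def by auto
  then show ?thesis
  proof cases
    case multiple
    then show ?thesis using c_pow_two_pow_mult c_pow_q c_ne_moebius by auto
  next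
    case two
    have "c ^ 2 ^ (2 * i) = (c ^ q) ^ 2"
      using two by (simp flip: power_mult)
    then have "c ^ 2 ^ (2 * i) \<noteq> c"
      using c_pow_q c_square_ne_c by simp
    then show ?thesis
      using c_pow_two_pow_double_eq_if_moebius by blast
  next
    case four
    have "c ^ 2 ^ (2 * i) = ((c ^ q) ^ q) ^ 4"
      using four by (simp flip: power_mult)
    then have "c ^ 2 ^ (2 * i) = c ^ 4"
      using c_pow_q by simp
    moreover have "c ^ 4 \<noteq> c"
    proof
      assume "c ^ 4 = c"
      moreover have "c ^ q = (c ^ 4) ^ 2"
        using four by (simp flip: power_mult)
      ultimately show False
        using c_pow_q c_square_ne_c by simp
    qed
    ultimately have "c ^ 2 ^ (2 * i) \<noteq> c"
      by simp
    then show ?thesis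
      using c_pow_two_pow_double_eq_if_moebius by blast
  qed
qed

lemma a0_mult_order_small:
  assumes "f \<le> 3"
  shows "mult_order a\<^sub>0 = q + 1"
proof -
  have "f = 2 \<or> f = 3" using assms f_ge_2 by auto
  then show ?thesis
  proof
    assume "f = 2"
    then have "a\<^sub>0 ^ (5 ^ Suc 0) = 1" using a0_pow_q_plus_1 by simp
    then have "mult_order a\<^sub>0 = 5 ^ Suc 0"
      using a0_ne_1 by (intro mult_order_prime_power) simp_all
    then show ?thesis using \<open>f = 2\<close> by simp
  next
    assume "f = 3"
    then have "a\<^sub>0 ^ (3 ^ Suc 1) = 1" using a0_pow_q_plus_1 by simp
    moreover have "a\<^sub>0 ^ 3 \<noteq> 1"
      using add_inverse_add_1_eq_0_iff[OF a0_ne_1] a0_add_inverse_add_1 c_ne_0 c_plus_1_ne_0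
      by simp
    ultimately have "mult_order a\<^sub>0 = 3 ^ Suc 1"
      by (intro mult_order_prime_power) simp_all
    then show ?thesis using \<open>f = 3\<close> by simp
  qed
qed

lemma exists_admissible_small:
  assumes "f \<le> 3"
  shows "\<exists>a. mult_order a = q + 1 \<and> admissible a"
proof -
  have "admissible a\<^sub>0"
    unfolding admissible_def a0_add_inverse_add_1 a0_mult_A_add_inverse_mult_B
    using c_pow_two_pow_ne_moebius_small[OF assms] c_ne_0 c_plus_1_ne_0 by simp
  then show ?thesis
    using a0_mult_order_small[OF assms] by blast
qed

definition c_powers :: "'a set" where
  "c_powers = (\<lambda>i. c ^ 2 ^ i) ` exponent_set"

lemma c_powers_eq:
  "c_powers = {c, c ^ 2 ^ (2 * f div gcd 3 f), c ^ 2 ^ (4 * f div gcd 3 f)}"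
  using c_pow_q by (auto simp: c_powers_def exponent_set_def)

lemma card_c_powers_le_3: "card c_powers \<le> 3"
  unfolding c_powers_eq by (simp add: card_insert_if)

lemma c_powers_coprime:
  assumes "gcd 3 f = 1"
  shows "c_powers = {c}"
  unfolding c_powers_eq using assms c_pow_two_pow_mult[of 2] c_pow_two_pow_mult[of 4]
  by (simp add: mult.commute)

lemma card_nonadmissible_le:
  "card {a. a \<noteq> 0 \<and> \<not> admissible a} \<le> 4 * card c_powers + 2"
proof -
  define sols where "sols u v w = {x. x \<noteq> 0 \<and> u * x + v * inverse x = w}" for u v w :: 'a
  have "a \<in> sols (A - 1) (B - 1) 1"
    if "a \<noteq> 0" "a + inverse a + 1 = a * A + inverse a * B" for a
  proof -
    have "(A - 1) * a + (B - 1) * inverse a = (a * A + inverse a * B) - (a + inverse a)"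
      by (simp add: algebra_simps)
    also have "\<dots> = 1"
      by (simp flip: that(2))
    finally show ?thesis
      using that(1) by (simp add: sols_def)
  qed
  then have "{a. a \<noteq> 0 \<and> \<not> admissible a} \<subseteq>
      (\<Union>s\<in>c_powers. sols 1 1 (s - 1) \<union> sols A B s) \<union> sols (A - 1) (B - 1) 1"
    by (auto simp: admissible_def c_powers_def sols_def mult.commute)
  then have "card {a. a \<noteq> 0 \<and> \<not> admissible a} \<le>
      card (\<Union>s\<in>c_powers. sols 1 1 (s - 1) \<union> sols A B s) + card (sols (A - 1) (B - 1) 1)"
    by (meson card_Un_le card_mono finite dual_order.trans)
  also have "\<dots> \<le> (\<Sum>s\<in>c_powers. card (sols 1 1 (s - 1) \<union> sols A B s)) + 2"
    using card_nonzero_solutions_le_2[of "A - 1" "B - 1" 1]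
    by (intro add_mono card_UN_le) (simp_all add: sols_def)
  also have "\<dots> \<le> (\<Sum>s\<in>c_powers. 4) + 2"
  proof (intro add_mono sum_mono order_refl)
    fix s assume "s \<in> c_powers"
    then have "s \<noteq> 0" using c_ne_0 by (auto simp: c_powers_def)
    then show "card (sols 1 1 (s - 1) \<union> sols A B s) \<le> 4"
      using card_nonzero_solutions_le_2[of 1 1 "s - 1"] card_nonzero_solutions_le_2[of A B s]
        card_Un_le[of "sols 1 1 (s - 1)" "sols A B s"]
      by (simp add: sols_def)
  qed
  finally show ?thesis
    by simp
qed

lemma card_nonadmissible_less_totient:
  assumes "4 \<le> f"
  shows "card {a. a \<noteq> 0 \<and> \<not> admissible a} < totient (q + 1)"
proof -
  have totient_ge: "2 * f \<le> totient (q + 1)"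
    using two_mult_le_totient_two_power_plus_1 assms by simp
  have "gcd 3 f dvd 3" by simp
  then have "gcd 3 f = 1 \<or> gcd 3 f = 3"
    using prime_nat_iff[of 3] by simp
  then show ?thesis
  proof
    assume "gcd 3 f = 1"
    then show ?thesis
      using card_nonadmissible_le c_powers_coprime totient_ge assms by simp
  next
    assume "gcd 3 f = 3"
    then obtain k where k: "f = 3 * k" by (metis gcd_dvd2 dvdE)
    have "14 < totient (q + 1)"
    proof (cases "k = 2")
      case True \<comment> \<open>here the bound 2f = 12 is too weak\<close>
      then have "q + 1 = 5 * 13" using k by simp
      moreover have "totient (5 * 13) = totient 5 * totient 13"
        by (rule totient_mult_coprime) (simp add: primes_coprime)
      ultimately show ?thesis by (simp add: totient_prime)
    next
      case False
      then have "3 \<le> k" using k assms by simp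
      then show ?thesis using k totient_ge by simp
    qed
    then show ?thesis
      using card_nonadmissible_le card_c_powers_le_3 by simp
  qed
qed

lemma exists_admissible_large:
  assumes "4 \<le> f"
  shows "\<exists>a. mult_order a = q + 1 \<and> admissible a"
proof (rule ccontr)
  assume none: "\<nexists>a. mult_order a = q + 1 \<and> admissible a"
  obtain k where "q = Suc k"
    using q_ge_4 gr0_implies_Suc[of q] by auto
  then have "card (UNIV :: 'a set) - 1 = (q - 1) * (q + 1)"
    using card_UNIV by (simp add: power2_eq_square)
  then have "q + 1 dvd card (UNIV :: 'a set) - 1"
    by (simp only: dvd_triv_right)
  then have "totient (q + 1) \<le> card {x::'a. mult_order x = q + 1}"
    by (rule totient_le_card_mult_order_eq)
  also have "\<dots> \<le> card {a. a \<noteq> 0 \<and> \<not> admissible a}"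
    using none by (intro card_mono) (auto intro: Nat.gr0I)
  finally show False
    using card_nonadmissible_less_totient[OF assms] by simp
qed

lemma exists_admissible: "\<exists>a. mult_order a = q + 1 \<and> admissible a"
  using exists_admissible_small exists_admissible_large by (cases "f \<le> 3") simp_all

end

theorem lemma3p1:
  fixes f :: nat and b :: "'a::{field,finite}"
  assumes card: "card (UNIV :: 'a set) = (2 ^ f) ^ 2"
    and q4: "2 ^ f \<ge> (4::nat)"
    and b0: "b \<noteq> 0"
    and btr: "b + b ^ (2 ^ f) = 1"
    and bn: "b ^ (2 ^ f + 1) \<noteq> 1"
  shows "\<exists>a::'a. a \<noteq> 0 \<and> mult_order a = 2 ^ f + 1 \<and>
    (\<forall>i \<in> {0, f, 2 * f div gcd 3 f, 4 * f div gcd 3 f}.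
        (1 + b + b ^ 2) ^ (2 ^ i) \<noteq> a + inverse a + 1) \<and>
    (\<forall>i \<in> {0, f, 2 * f div gcd 3 f, 4 * f div gcd 3 f}.
        (1 + b + b ^ 2) ^ (2 ^ i) \<noteq>
          a * (1 + b + b ^ 3 + b ^ 4) + inverse a * (b ^ 2 + b ^ 3 + b ^ 4)) \<and>
    a + inverse a + 1 \<noteq> a * (1 + b + b ^ 3 + b ^ 4) + inverse a * (b ^ 2 + b ^ 3 + b ^ 4) \<and>
    a + inverse a + 1 \<noteq> 0"
proof -
  interpret trace_one_element f b
    using assms by unfold_locales
  obtain a where ord: "mult_order a = 2 ^ f + 1" and "admissible a"
    using exists_admissible by blast
  moreover have "a \<noteq> 0"
    using ord by (intro notI) simp
  moreover have "a + inverse a + 1 \<noteq> 0"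
    using ord q4 by (intro add_inverse_add_1_ne_0) simp
  ultimately show ?thesis
    unfolding admissible_def exponent_set_def c_def A_def B_def by blast
qed

end
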